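(* Let $f:\mathbf{R}^d\times A\to\mathbf{R}^d$ be bounded with $\|f(x,a)\|\le M$ for all states $x$ and actions $a\in A$, Lipschitz continuous in the state, $\|f(x,a)-f(x',a)\|\le L\|x-x'\|$, and approximately odd in the action: $f(x,-a)=-f(x,a)+\epsilon(x,a)$ with $\|\epsilon(x,a)\|\le E$ for all $x,a$. Let $\nu>0$, $T\in\mathbf{N}$, and let $x_T(0),\dots,x_T(2T)$ be generated by Euler's method $x_T(k+1)=x_T(k)+\nu f(x_T(k),a_T(k))$ with actions $a_T(0),\dots,a_T(2T-1)\in A$ satisfying $a_T(T+k)=-a_T(T-1-k)$ for $k=0,\dots,T-1$. Then $$\|x_T(0)-x_T(2T)\|\le\left(\nu M+\frac{E}{L}\right)\left[e^{TL\nu}-1\right].$$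
   Context: This models discretized teleoperation with a learned action map $f$: $x_T(k)\in\mathbf{R}^d$ is the robot state at step $k$, $a_T(k)$ the user's action (from a bounded action set $A$ closed under negation), and $\nu>0$ the update rate; $\epsilon$ is the residual error by which the map fails to be exactly odd in the action. *)

theory Defs
  imports "HOL-Analysis.Analysis"
begin

end

theory Submission
  imports Defs
begin

text \<open>Run the trajectory outward from its midpoint \<open>x T\<close>: step \<open>j\<close> moves \<open>x (T + j)\<close> forward
  with action \<open>-b\<close> and \<open>x (T - j)\<close> backward with action \<open>b\<close>. Because \<open>f\<close> is odd up to \<open>\<epsilon>\<close>,
  the two increments cancel up to a Lipschitz error and \<open>\<nu> \<epsilon>\<close>, so the gap
  \<open>d j = \<parallel>x (T + j) - x (T - j)\<parallel>\<close> obeys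
  \<open>d (j + 1) \<le> (1 + \<nu> L) d j + \<nu> L (\<nu> M + E / L)\<close> with \<open>d 0 = 0\<close>; a discrete Gronwall
  argument gives \<open>d T \<le> (\<nu> M + E / L) (exp (T L \<nu>) - 1)\<close>.\<close>

lemma affine_recurrence_le_power:
  fixes d :: "nat \<Rightarrow> real"
  assumes "h \<ge> -1" and "d 0 \<le> 0"
    and step: "\<And>j. j < n \<Longrightarrow> d (Suc j) \<le> (1 + h) * d j + h * C"
  shows "d n \<le> C * ((1 + h) ^ n - 1)"
  using step
proof (induction n)
  case 0
  then show ?case using \<open>d 0 \<le> 0\<close> by simp
next
  case (Suc n)
  have "d (Suc n) \<le> (1 + h) * d n + h * C"
    using Suc.prems by simp
  also have "\<dots> \<le> (1 + h) * (C * ((1 + h) ^ n - 1)) + h * C"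
    using Suc by (intro add_right_mono mult_left_mono) (use \<open>h \<ge> -1\<close> in simp_all)
  also have "\<dots> = C * ((1 + h) ^ Suc n - 1)"
    by (simp add: algebra_simps)
  finally show ?case .
qed

lemma discrete_gronwall:
  fixes d :: "nat \<Rightarrow> real"
  assumes "h \<ge> 0" and "C \<ge> 0" and "d 0 \<le> 0"
    and "\<And>j. j < n \<Longrightarrow> d (Suc j) \<le> (1 + h) * d j + h * C"
  shows "d n \<le> C * (exp (real n * h) - 1)"
proof -
  have "d n \<le> C * ((1 + h) ^ n - 1)"
    using assms by (intro affine_recurrence_le_power) auto
  also have "(1 + h) ^ n \<le> exp h ^ n"
    using \<open>h \<ge> 0\<close> by (intro power_mono) (auto simp: add.commute exp_ge_add_one_self)
  then have "C * ((1 + h) ^ n - 1) \<le> C * (exp (real n * h) - 1)"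
    using \<open>C \<ge> 0\<close> by (simp add: mult_left_mono exp_of_nat_mult)
  finally show ?thesis .
qed

lemma reflected_euler_step:
  fixes f :: "'s::real_normed_vector \<Rightarrow> 'b::real_normed_vector \<Rightarrow> 's"
  assumes "\<nu> \<ge> 0" and "L \<ge> 0"
    and f_bound: "norm (f z b) \<le> M"
    and f_lip: "norm (f z b - f y b) \<le> L * norm (z - y)"
    and f_odd: "f y (- b) = - f y b + e"
    and e_bound: "norm e \<le> E"
  shows "norm (y + \<nu> *\<^sub>R f y (- b) - z)
    \<le> (1 + \<nu> * L) * norm (y - (z + \<nu> *\<^sub>R f z b)) + \<nu> * L * (\<nu> * M) + \<nu> * E"
proof -
  define d where "d = y - (z + \<nu> *\<^sub>R f z b)"
  have gap: "y + \<nu> *\<^sub>R f y (- b) - z = d + \<nu> *\<^sub>R (f z b - f y b) + \<nu> *\<^sub>R e"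
    unfolding d_def f_odd by (simp add: algebra_simps)
  have "norm (z - y) \<le> norm d + \<nu> * M"
  proof -
    have "z - y = - d - \<nu> *\<^sub>R f z b"
      unfolding d_def by (simp add: algebra_simps)
    then have "norm (z - y) \<le> norm d + norm (\<nu> *\<^sub>R f z b)"
      by (metis norm_minus_cancel norm_triangle_ineq4)
    moreover have "norm (\<nu> *\<^sub>R f z b) \<le> \<nu> * M"
      using f_bound \<open>\<nu> \<ge> 0\<close> by (simp add: mult_left_mono)
    ultimately show ?thesis
      by linarith
  qed
  then have lip: "norm (f z b - f y b) \<le> L * (norm d + \<nu> * M)"
    using f_lip \<open>L \<ge> 0\<close> by (meson mult_left_mono order_trans)
  have "norm (y + \<nu> *\<^sub>R f y (- b) - z) \<le> norm d + \<nu> * norm (f z b - f y b) + \<nu> * norm e"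
    unfolding gap using \<open>\<nu> \<ge> 0\<close> by (metis abs_of_nonneg norm_scaleR norm_triangle_le norm_triangle_ineq add_mono order_refl)
  also have "\<dots> \<le> norm d + \<nu> * (L * (norm d + \<nu> * M)) + \<nu> * E"
    using lip e_bound \<open>\<nu> \<ge> 0\<close> by (intro add_mono mult_left_mono) auto
  also have "\<dots> = (1 + \<nu> * L) * norm d + \<nu> * L * (\<nu> * M) + \<nu> * E"
    by (simp add: algebra_simps)
  finally show ?thesis
    unfolding d_def .
qed

lemma reflected_euler_gap_step:
  fixes f :: "'s::real_normed_vector \<Rightarrow> 'b::real_normed_vector \<Rightarrow> 's"
  assumes f_bound: "\<forall>y. \<forall>b\<in>A. norm (f y b) \<le> M"
    and f_lip: "\<forall>y y'. \<forall>b\<in>A. norm (f y b - f y' b) \<le> L * norm (y - y')"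
    and f_odd: "\<forall>y. \<forall>b\<in>A. f y (- b) = - f y b + eps y b"
    and eps_bound: "\<forall>y. \<forall>b\<in>A. norm (eps y b) \<le> E"
    and actions: "\<forall>k<2*T. a k \<in> A"
    and euler: "\<forall>k<2*T. x (Suc k) = x k + \<nu> *\<^sub>R f (x k) (a k)"
    and reversal: "\<forall>k<T. a (T + k) = - a (T - 1 - k)"
    and "\<nu> \<ge> 0" and "L \<ge> 0" and "j < T"
  shows "norm (x (T + Suc j) - x (T - Suc j))
    \<le> (1 + \<nu> * L) * norm (x (T + j) - x (T - j)) + \<nu> * L * (\<nu> * M) + \<nu> * E"
proof -
  define b where "b = a (T - 1 - j)"
  have "b \<in> A"
    using actions \<open>j < T\<close> unfolding b_def by simp
  have backward: "x (T - j) = x (T - Suc j) + \<nu> *\<^sub>R f (x (T - Suc j)) b"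
    using euler[rule_format, of "T - Suc j"] \<open>j < T\<close> unfolding b_def
    by (simp add: Suc_diff_Suc)
  have forward: "x (T + Suc j) = x (T + j) + \<nu> *\<^sub>R f (x (T + j)) (- b)"
    using euler[rule_format, of "T + j"] reversal[rule_format, of j] \<open>j < T\<close> unfolding b_def
    by simp
  show ?thesis
    unfolding forward backward
  proof (rule reflected_euler_step)
    show "norm (f (x (T - Suc j)) b) \<le> M"
      using f_bound \<open>b \<in> A\<close> by blast
    show "norm (f (x (T - Suc j)) b - f (x (T + j)) b) \<le> L * norm (x (T - Suc j) - x (T + j))"
      using f_lip \<open>b \<in> A\<close> by blast
    show "f (x (T + j)) (- b) = - f (x (T + j)) b + eps (x (T + j)) b"
      using f_odd \<open>b \<in> A\<close> by blast
    show "norm (eps (x (T + j)) b) \<le> E"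
      using eps_bound \<open>b \<in> A\<close> by blast
  qed fact+
qed

theorem corollary1:
  fixes f :: "('s::euclidean_space) \<Rightarrow> ('b::real_normed_vector) \<Rightarrow> 's"
    and eps :: "'s \<Rightarrow> 'b \<Rightarrow> 's"
    and A :: "'b set"
    and M L E \<nu> :: real
    and T :: nat
    and x :: "nat \<Rightarrow> 's"
    and a :: "nat \<Rightarrow> 'b"
  assumes A_bounded: "bounded A"
    and A_neg: "\<forall>b\<in>A. - b \<in> A"
    and f_bound: "\<forall>y. \<forall>b\<in>A. norm (f y b) \<le> M"
    and f_lip: "\<forall>y y'. \<forall>b\<in>A. norm (f y b - f y' b) \<le> L * norm (y - y')"
    and L_pos: "L > 0"
    and f_odd: "\<forall>y. \<forall>b\<in>A. f y (- b) = - f y b + eps y b"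
    and eps_bound: "\<forall>y. \<forall>b\<in>A. norm (eps y b) \<le> E"
    and nu_pos: "\<nu> > 0"
    and actions: "\<forall>k<2*T. a k \<in> A"
    and euler: "\<forall>k<2*T. x (Suc k) = x k + \<nu> *\<^sub>R f (x k) (a k)"
    and reversal: "\<forall>k<T. a (T + k) = - a (T - 1 - k)"
  shows "norm (x 0 - x (2*T)) \<le> (\<nu> * M + E / L) * (exp (real T * L * \<nu>) - 1)"
proof (cases "T = 0")
  case False
  then have "a 0 \<in> A"
    using actions by simp
  then have "M \<ge> 0" and "E \<ge> 0"
    using f_bound eps_bound by (meson norm_ge_zero order_trans)+
  define d where "d j = norm (x (T + j) - x (T - j))" for j
  have "d (Suc j) \<le> (1 + \<nu> * L) * d j + \<nu> * L * (\<nu> * M + E / L)" if "j < T" for j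
  proof -
    have "d (Suc j) \<le> (1 + \<nu> * L) * d j + \<nu> * L * (\<nu> * M) + \<nu> * E"
      unfolding d_def using f_bound f_lip f_odd eps_bound actions euler reversal
      by (rule reflected_euler_gap_step) (use nu_pos L_pos that in auto)
    also have "\<dots> = (1 + \<nu> * L) * d j + \<nu> * L * (\<nu> * M + E / L)"
      using L_pos by (simp add: field_simps)
    finally show ?thesis .
  qed
  then have "d T \<le> (\<nu> * M + E / L) * (exp (real T * (\<nu> * L)) - 1)"
    using nu_pos L_pos \<open>M \<ge> 0\<close> \<open>E \<ge> 0\<close> by (intro discrete_gronwall) (auto simp: d_def)
  moreover have "norm (x 0 - x (2*T)) = d T"
    by (simp add: d_def norm_minus_commute mult_2)
  ultimately show ?thesis
    by (simp add: mult_ac)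
qed simp

end
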